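(* Let $G=C(n;\{1,2,\dots,k\})$, where $n\geq 4$ and $1\leq k<\lfloor n/2\rfloor$. Then $G$ is a hypo-unique domination graph if and only if $2k+1$ divides $n-1$. If $2k+1$ divides $n-1$, then $n=|V(G)|=(\Delta(G)+1)(\gamma(G)-1)+1$ and $G$ is a hypo-efficient domination graph.
   Context: All graphs are finite, simple and undirected. The circulant graph $C(n;\{1,\dots,k\})$ has vertex set $\{0,1,\dots,n-1\}$, with $i$ adjacent to $i\pm 1,\dots,i\pm k \pmod n$. For $v\in V(G)$, $N[v]$ is the closed neighborhood of $v$. A set $D\subseteq V(G)$ is dominating if every vertex of $G$ not in $D$ has a neighbor in $D$; $\gamma(G)$ is the minimum size of a dominating set, and a dominating set of size $\gamma(G)$ is a $\gamma$-set. A set $D\subseteq V(H)$ is an efficient dominating set (EDS) of $H$ if $|N_H[v]\cap D|=1$ for every $v\in V(H)$. $G$ is a hypo-efficient domination graph if $G$ has no EDS but $G-v$ has at least one EDS for every $v\in V(G)$. $G$ is a hypo-unique domination graph if $G$ has at least two $\gamma$-sets but $G-v$ has exactly one $\gamma$-set for every $v\in V(G)$. $\Delta(G)$ is the maximum degree. *)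

theory Defs
  imports Main
begin

type_synonym 'a graph = "'a set \<times> ('a \<Rightarrow> 'a \<Rightarrow> bool)"

definition verts :: "'a graph \<Rightarrow> 'a set" where "verts G = fst G"
definition adj :: "'a graph \<Rightarrow> 'a \<Rightarrow> 'a \<Rightarrow> bool" where "adj G = snd G"

definition closed_nbhd :: "'a graph \<Rightarrow> 'a \<Rightarrow> 'a set" where
  "closed_nbhd G v = {u \<in> verts G. u = v \<or> adj G v u}"

definition dominating :: "'a graph \<Rightarrow> 'a set \<Rightarrow> bool" where
  "dominating G D \<longleftrightarrow> D \<subseteq> verts G \<and> (\<forall>v \<in> verts G - D. \<exists>u \<in> D. adj G v u)"

definition domination_number :: "'a graph \<Rightarrow> nat" where
  "domination_number G = Min {card D | D. dominating G D}"

definition gamma_set :: "'a graph \<Rightarrow> 'a set \<Rightarrow> bool" where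
  "gamma_set G D \<longleftrightarrow> dominating G D \<and> card D = domination_number G"

definition efficient_dominating :: "'a graph \<Rightarrow> 'a set \<Rightarrow> bool" where
  "efficient_dominating G D \<longleftrightarrow> D \<subseteq> verts G \<and> (\<forall>v \<in> verts G. card (closed_nbhd G v \<inter> D) = 1)"

definition delete_vertex :: "'a graph \<Rightarrow> 'a \<Rightarrow> 'a graph" where
  "delete_vertex G v = (verts G - {v}, \<lambda>x y. adj G x y \<and> x \<noteq> v \<and> y \<noteq> v)"

definition hypo_efficient :: "'a graph \<Rightarrow> bool" where
  "hypo_efficient G \<longleftrightarrow> \<not> (\<exists>D. efficient_dominating G D) \<and>
     (\<forall>v \<in> verts G. \<exists>D. efficient_dominating (delete_vertex G v) D)"

definition hypo_unique :: "'a graph \<Rightarrow> bool" where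
  "hypo_unique G \<longleftrightarrow> (\<exists>D1 D2. D1 \<noteq> D2 \<and> gamma_set G D1 \<and> gamma_set G D2) \<and>
     (\<forall>v \<in> verts G. \<exists>!D. gamma_set (delete_vertex G v) D)"

definition degree :: "'a graph \<Rightarrow> 'a \<Rightarrow> nat" where
  "degree G v = card {u \<in> verts G. adj G v u}"

definition max_degree :: "'a graph \<Rightarrow> nat" where
  "max_degree G = Max (degree G ` verts G)"

definition circulant :: "nat \<Rightarrow> nat \<Rightarrow> nat graph" where
  "circulant n k = ({0..<n}, \<lambda>i j. i < n \<and> j < n \<and> i \<noteq> j \<and>
      (\<exists>d \<in> {1..k}. (i + d) mod n = j \<or> (j + d) mod n = i))"

end

theory Submission
  imports Defs
begin

text \<open>Put \<open>m = 2k + 1\<close>. Every closed neighbourhood of \<open>G = C(n; {1..k})\<close> is an arc of \<open>m\<close>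
  vertices, and rotations of \<open>\<int>/n\<int>\<close> identify every vertex-deleted subgraph \<open>G - v\<close> with
  \<open>G - 0\<close>, which lives on \<open>{1..n-1}\<close>. Double counting the pairs (vertex, dominator) shows that a
  dominating set \<open>D\<close> of a graph with vertex set \<open>V\<close> satisfies \<open>|V| \<le> (\<Sum>u\<in>D. |N[u]|)\<close>,
  with equality exactly for efficient dominating sets.

  If \<open>n - 1 = q m\<close>, the arcs centred at \<open>k + 1, k + 1 + m, \<dots>\<close> tile \<open>{1..n-1}\<close>, so
  \<open>\<gamma>(G - 0) = q\<close>. A dominating set of size \<open>q\<close> meets the bound with equality: its arcs are
  full, pairwise disjoint, and a left-to-right induction forces them to be this tiling. Hence
  every \<open>G - v\<close> has a unique \<open>\<gamma>\<close>-set, which is efficient; \<open>G\<close> has \<open>\<gamma>(G) = q + 1\<close> with two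
  \<open>\<gamma>\<close>-sets obtained by adding \<open>0\<close> or \<open>1\<close> to the tiling, and no efficient dominating set since
  \<open>m\<close> cannot divide both \<open>n - 1\<close> and \<open>n\<close>.

  If \<open>m\<close> does not divide \<open>n - 1\<close>, the \<open>q = \<lfloor>(n-1)/m\<rfloor>\<close> tiles leave fewer than \<open>m\<close>
  vertices at the end, which either of two consecutive extra centres covers, so \<open>G - 0\<close> has
  two \<open>\<gamma>\<close>-sets.\<close>

section \<open>Counting closed neighbourhoods\<close>

lemma closed_nbhd_subset_verts: "closed_nbhd G v \<subseteq> verts G"
  by (auto simp: closed_nbhd_def)

lemma finite_closed_nbhd: "finite (verts G) \<Longrightarrow> finite (closed_nbhd G v)"
  using closed_nbhd_subset_verts by (rule finite_subset)

lemma mem_closed_nbhd_commute: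
  assumes "symp (adj G)" "x \<in> verts G" "u \<in> verts G"
  shows "x \<in> closed_nbhd G u \<longleftrightarrow> u \<in> closed_nbhd G x"
  using assms by (auto simp: closed_nbhd_def dest: sympD)

lemma dominating_iff_closed_nbhd:
  "dominating G D \<longleftrightarrow> D \<subseteq> verts G \<and> (\<forall>x \<in> verts G. closed_nbhd G x \<inter> D \<noteq> {})"
  unfolding dominating_def closed_nbhd_def by blast

lemma sum_card_closed_nbhd_eq:
  assumes "symp (adj G)" "finite (verts G)" "D \<subseteq> verts G"
  shows "(\<Sum>u\<in>D. card (closed_nbhd G u)) = (\<Sum>x\<in>verts G. card (closed_nbhd G x \<inter> D))"
proof -
  have fin: "finite D" using assms(2,3) by (rule finite_subset[rotated])
  have "(\<Sum>u\<in>D. card (closed_nbhd G u)) = (\<Sum>u\<in>D. \<Sum>x\<in>verts G. of_bool (x \<in> closed_nbhd G u))"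
    using assms(2) by (simp add: Int_absorb1[OF closed_nbhd_subset_verts])
  also have "\<dots> = (\<Sum>x\<in>verts G. \<Sum>u\<in>D. of_bool (u \<in> closed_nbhd G x))"
    using assms(1,3) by (subst sum.swap) (auto intro!: sum.cong simp: mem_closed_nbhd_commute)
  also have "\<dots> = (\<Sum>x\<in>verts G. card (closed_nbhd G x \<inter> D))"
    using fin by (simp add: Int_commute)
  finally show ?thesis .
qed

lemma one_le_card_closed_nbhd_Int:
  assumes "finite (verts G)" "dominating G D" "x \<in> verts G"
  shows "1 \<le> card (closed_nbhd G x \<inter> D)"
proof -
  have "closed_nbhd G x \<inter> D \<noteq> {}" using assms(2,3) by (simp add: dominating_iff_closed_nbhd)
  moreover have "finite (closed_nbhd G x \<inter> D)"
    using finite_closed_nbhd[OF assms(1)] by simp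
  ultimately show ?thesis by (simp add: Suc_le_eq card_gt_0_iff)
qed

lemma card_verts_le_sum_card_closed_nbhd:
  assumes "symp (adj G)" "finite (verts G)" "dominating G D"
  shows "card (verts G) \<le> (\<Sum>u\<in>D. card (closed_nbhd G u))"
proof -
  have "card (verts G) = (\<Sum>x\<in>verts G. 1)" by simp
  also have "\<dots> \<le> (\<Sum>x\<in>verts G. card (closed_nbhd G x \<inter> D))"
    using assms(2,3) by (intro sum_mono one_le_card_closed_nbhd_Int)
  also have "\<dots> = (\<Sum>u\<in>D. card (closed_nbhd G u))"
    using assms by (simp add: sum_card_closed_nbhd_eq dominating_def)
  finally show ?thesis .
qed

lemma efficient_dominating_if_sum_card_closed_nbhd_le:
  assumes "symp (adj G)" "finite (verts G)" "dominating G D"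
    and "(\<Sum>u\<in>D. card (closed_nbhd G u)) \<le> card (verts G)"
  shows "efficient_dominating G D"
  unfolding efficient_dominating_def
proof (intro conjI ballI)
  show "D \<subseteq> verts G" using assms(3) by (simp add: dominating_def)
  then have "(\<Sum>x\<in>verts G. card (closed_nbhd G x \<inter> D)) = (\<Sum>x\<in>verts G. 1)"
    using assms card_verts_le_sum_card_closed_nbhd[OF assms(1-3)]
    by (simp add: sum_card_closed_nbhd_eq)
  then have "1 = card (closed_nbhd G x \<inter> D)" if "x \<in> verts G" for x
    by (rule sum_mono_inv[OF sym]) (use assms(2) that one_le_card_closed_nbhd_Int[OF assms(2,3)] in auto)
  then show "card (closed_nbhd G x \<inter> D) = 1" if "x \<in> verts G" for x
    using that by simp
qed

lemma sum_card_closed_nbhd_efficient: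
  assumes "symp (adj G)" "finite (verts G)" "efficient_dominating G D"
  shows "(\<Sum>u\<in>D. card (closed_nbhd G u)) = card (verts G)"
  using assms by (simp add: sum_card_closed_nbhd_eq efficient_dominating_def)

lemma domination_number_eqI:
  assumes "finite (verts G)" "dominating G D" "\<And>D'. dominating G D' \<Longrightarrow> card D \<le> card D'"
  shows "domination_number G = card D"
proof -
  have "{card D' | D'. dominating G D'} \<subseteq> {..card (verts G)}"
    using assms(1) by (auto simp: dominating_def intro: card_mono)
  then have "finite {card D' | D'. dominating G D'}" by (rule finite_subset) simp
  then show ?thesis unfolding domination_number_def using assms(2,3) by (intro Min_eqI) auto
qed

section \<open>Vertex deletion and isomorphisms\<close>

lemma verts_delete_vertex: "verts (delete_vertex G v) = verts G - {v}"
  by (simp add: verts_def delete_vertex_def)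

lemma adj_delete_vertex: "adj (delete_vertex G v) x y \<longleftrightarrow> adj G x y \<and> x \<noteq> v \<and> y \<noteq> v"
  by (simp add: adj_def delete_vertex_def)

lemma closed_nbhd_delete_vertex:
  "u \<noteq> v \<Longrightarrow> closed_nbhd (delete_vertex G v) u = closed_nbhd G u - {v}"
  unfolding closed_nbhd_def verts_delete_vertex adj_delete_vertex by auto

lemma symp_adj_delete_vertex: "symp (adj G) \<Longrightarrow> symp (adj (delete_vertex G v))"
  by (auto simp: adj_delete_vertex intro!: sympI dest: sympD)

locale graph_iso =
  fixes G :: "'a graph" and H :: "'b graph" and f :: "'a \<Rightarrow> 'b"
  assumes bij: "bij_betw f (verts G) (verts H)"
    and adj_iff: "\<And>x y. x \<in> verts G \<Longrightarrow> y \<in> verts G \<Longrightarrow> adj H (f x) (f y) \<longleftrightarrow> adj G x y"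
begin

lemma inj: "inj_on f (verts G)"
  using bij by (simp add: bij_betw_def)

lemma image_verts: "f ` verts G = verts H"
  using bij by (simp add: bij_betw_def)

lemma card_image_subset: "D \<subseteq> verts G \<Longrightarrow> card (f ` D) = card D"
  using inj by (meson card_image inj_on_subset)

lemma closed_nbhd_image:
  assumes "x \<in> verts G"
  shows "closed_nbhd H (f x) = f ` closed_nbhd G x"
proof -
  have "closed_nbhd H (f x) = f ` {y \<in> verts G. f y = f x \<or> adj H (f x) (f y)}"
    unfolding closed_nbhd_def image_verts[symmetric] by blast
  also have "\<dots> = f ` closed_nbhd G x"
    using assms inj by (auto simp: closed_nbhd_def adj_iff inj_on_eq_iff)
  finally show ?thesis .
qed

lemma closed_nbhd_Int_image:
  assumes "x \<in> verts G" "D \<subseteq> verts G"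
  shows "closed_nbhd H (f x) \<inter> f ` D = f ` (closed_nbhd G x \<inter> D)"
  using inj_on_image_Int[OF inj closed_nbhd_subset_verts assms(2)]
  by (simp add: closed_nbhd_image assms(1))

lemma dominating_image_iff:
  assumes "D \<subseteq> verts G"
  shows "dominating H (f ` D) \<longleftrightarrow> dominating G D"
  using assms closed_nbhd_Int_image image_verts[symmetric]
  by (auto simp: dominating_iff_closed_nbhd)

lemma efficient_dominating_image:
  assumes "efficient_dominating G D"
  shows "efficient_dominating H (f ` D)"
proof -
  have D: "D \<subseteq> verts G" using assms by (simp add: efficient_dominating_def)
  have "card (closed_nbhd H (f x) \<inter> f ` D) = 1" if "x \<in> verts G" for x
    using assms that D card_image_subset[of "closed_nbhd G x \<inter> D"]
    by (auto simp: closed_nbhd_Int_image efficient_dominating_def)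
  then show ?thesis
    using D unfolding efficient_dominating_def image_verts[symmetric] by blast
qed

lemma ex_subset_image: "D' \<subseteq> verts H \<Longrightarrow> \<exists>D \<subseteq> verts G. D' = f ` D"
  by (simp add: image_verts[symmetric] subset_image_iff)

lemma domination_number_eq: "domination_number H = domination_number G"
proof -
  have "{card D' | D'. dominating H D'} = {card D | D. dominating G D}"
  proof (intro equalityI subsetI)
    fix c assume "c \<in> {card D' | D'. dominating H D'}"
    then obtain D' where D': "dominating H D'" "c = card D'" by blast
    then have "D' \<subseteq> verts H" by (simp add: dominating_def)
    then obtain D where "D \<subseteq> verts G" "D' = f ` D"
      using ex_subset_image by blast
    then show "c \<in> {card D | D. dominating G D}"
      using D' dominating_image_iff card_image_subset by auto
  next
    fix c assume "c \<in> {card D | D. dominating G D}"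
    then obtain D where D: "dominating G D" "c = card D" by blast
    then have "D \<subseteq> verts G" by (simp add: dominating_def)
    then show "c \<in> {card D' | D'. dominating H D'}"
      using D dominating_image_iff card_image_subset by (metis (mono_tags, lifting) mem_Collect_eq)
  qed
  then show ?thesis by (simp add: domination_number_def)
qed

lemma gamma_set_image_iff:
  "D \<subseteq> verts G \<Longrightarrow> gamma_set H (f ` D) \<longleftrightarrow> gamma_set G D"
  by (simp add: gamma_set_def dominating_image_iff card_image_subset domination_number_eq)

lemma ex1_gamma_set_transfer:
  assumes "\<exists>!D. gamma_set G D"
  shows "\<exists>!D. gamma_set H D"
proof -
  obtain D0 where D0: "gamma_set G D0" and uniq: "\<And>D. gamma_set G D \<Longrightarrow> D = D0"
    using assms by blast
  have "D0 \<subseteq> verts G" using D0 by (simp add: gamma_set_def dominating_def)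
  moreover have "D' = f ` D0" if "gamma_set H D'" for D'
  proof -
    have "D' \<subseteq> verts H" using that by (simp add: gamma_set_def dominating_def)
    then obtain D where "D \<subseteq> verts G" "D' = f ` D"
      using ex_subset_image by blast
    then show ?thesis using that uniq gamma_set_image_iff by blast
  qed
  ultimately show ?thesis using D0 gamma_set_image_iff by blast
qed

end

section \<open>Circulant graphs\<close>

text \<open>For \<open>a, b < n\<close>: \<open>a\<close> and \<open>b\<close> are at distance at most \<open>k\<close> on the cycle \<open>\<int>/n\<int>\<close>.\<close>
definition cyc_near :: "nat \<Rightarrow> nat \<Rightarrow> nat \<Rightarrow> nat \<Rightarrow> bool" where
  "cyc_near n k a b \<longleftrightarrow> (a \<le> b + k \<and> b \<le> a + k) \<or> a + n \<le> b + k \<or> b + n \<le> a + k"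

lemma cyc_near_refl: "cyc_near n k a a"
  by (simp add: cyc_near_def)

lemma add_mod_less_double:
  fixes a b n :: nat
  assumes "a < n" "b < n"
  shows "(a + b) mod n = (if a + b < n then a + b else a + b - n)"
  using assms by (simp add: le_mod_geq)

lemma add_mod_right_inj:
  fixes x y v n :: nat
  assumes "x < n" "y < n" "v < n"
  shows "(x + v) mod n = (y + v) mod n \<longleftrightarrow> x = y"
  using assms by (simp add: add_mod_less_double) linarith

lemma add_mod_eq_iff:
  fixes a b d n :: nat
  assumes "a < n" "b < n" "d < n"
  shows "(a + d) mod n = b \<longleftrightarrow> a + d = b \<or> a + d = b + n"
  using assms by (auto simp: add_mod_less_double)

lemma cyc_near_rotate:
  assumes "a < n" "b < n" "v < n"
  shows "cyc_near n k ((a + v) mod n) ((b + v) mod n) \<longleftrightarrow> cyc_near n k a b"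
  using assms by (simp add: add_mod_less_double cyc_near_def) linarith

lemma verts_circulant: "verts (circulant n k) = {0..<n}"
  by (simp add: verts_def circulant_def)

lemma symp_adj_circulant: "symp (adj (circulant n k))"
  by (rule sympI) (auto simp: adj_def circulant_def)

lemma adj_circulant:
  assumes "a < n" "b < n" "k < n"
  shows "adj (circulant n k) a b \<longleftrightarrow> a \<noteq> b \<and> cyc_near n k a b"
proof -
  have "adj (circulant n k) a b \<longleftrightarrow>
      a \<noteq> b \<and> (\<exists>d\<in>{1..k}. a + d = b \<or> a + d = b + n \<or> b + d = a \<or> b + d = a + n)"
  proof -
    have "(\<exists>d\<in>{1..k}. (a + d) mod n = b \<or> (b + d) mod n = a) \<longleftrightarrow>
        (\<exists>d\<in>{1..k}. a + d = b \<or> a + d = b + n \<or> b + d = a \<or> b + d = a + n)"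
      by (rule bex_cong[OF refl]) (use assms in \<open>auto simp: add_mod_eq_iff\<close>)
    then show ?thesis using assms by (auto simp: adj_def circulant_def)
  qed
  also have "\<dots> \<longleftrightarrow> a \<noteq> b \<and> cyc_near n k a b"
  proof (rule conj_cong[OF refl])
    assume "a \<noteq> b"
    show "(\<exists>d\<in>{1..k}. a + d = b \<or> a + d = b + n \<or> b + d = a \<or> b + d = a + n) \<longleftrightarrow> cyc_near n k a b"
    proof
      assume "cyc_near n k a b"
      then consider "a < b" "b \<le> a + k" | "b < a" "a \<le> b + k" | "a + n \<le> b + k" | "b + n \<le> a + k"
        using \<open>a \<noteq> b\<close> unfolding cyc_near_def by linarith
      then show "\<exists>d\<in>{1..k}. a + d = b \<or> a + d = b + n \<or> b + d = a \<or> b + d = a + n"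
      proof cases
        case 1 then show ?thesis by (intro bexI[of _ "b - a"]) auto
      next
        case 2 then show ?thesis by (intro bexI[of _ "a - b"]) auto
      next
        case 3 then show ?thesis using assms by (intro bexI[of _ "a + n - b"]) auto
      next
        case 4 then show ?thesis using assms by (intro bexI[of _ "b + n - a"]) auto
      qed
    qed (auto simp: cyc_near_def)
  qed
  finally show ?thesis .
qed

lemma closed_nbhd_circulant:
  assumes "a < n" "k < n"
  shows "closed_nbhd (circulant n k) a = {b. b < n \<and> cyc_near n k a b}"
  using assms cyc_near_refl by (auto simp: closed_nbhd_def verts_circulant adj_circulant)

lemma card_closed_nbhd_circulant:
  assumes "a < n" "2 * k < n"
  shows "card (closed_nbhd (circulant n k) a) = 2 * k + 1"
proof -
  consider "k \<le> a" "a + k < n" | "a < k" | "n \<le> a + k" by linarith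
  then show ?thesis
  proof cases
    case 1
    then have "{b. b < n \<and> cyc_near n k a b} = {a - k..a + k}"
      using assms by (auto simp: cyc_near_def)
    then show ?thesis using assms 1 by (simp add: closed_nbhd_circulant)
  next
    case 2
    then have "{b. b < n \<and> cyc_near n k a b} = {0..a + k} \<union> {a + n - k..<n}"
      using assms by (auto simp: cyc_near_def)
    moreover have "card ({0..a + k} \<union> {a + n - k..<n}) = card {0..a + k} + card {a + n - k..<n}"
      using assms 2 by (intro card_Un_disjoint) auto
    ultimately show ?thesis using assms 2 by (simp add: closed_nbhd_circulant)
  next
    case 3
    then have "{b. b < n \<and> cyc_near n k a b} = {a - k..<n} \<union> {0..a + k - n}"
      using assms by (auto simp: cyc_near_def)
    moreover have "card ({a - k..<n} \<union> {0..a + k - n}) = card {a - k..<n} + card {0..a + k - n}"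
      using assms 3 by (intro card_Un_disjoint) auto
    ultimately show ?thesis using assms 3 by (simp add: closed_nbhd_circulant)
  qed
qed

lemma max_degree_circulant:
  assumes "2 * k < n"
  shows "max_degree (circulant n k) = 2 * k"
proof -
  have "degree (circulant n k) a = 2 * k" if "a < n" for a
  proof -
    have "{u \<in> verts (circulant n k). adj (circulant n k) a u} = closed_nbhd (circulant n k) a - {a}"
      using that assms by (auto simp: closed_nbhd_def verts_circulant adj_circulant)
    moreover have "a \<in> closed_nbhd (circulant n k) a" "finite (closed_nbhd (circulant n k) a)"
      using that by (auto simp: closed_nbhd_def verts_circulant finite_closed_nbhd)
    ultimately show ?thesis
      using card_closed_nbhd_circulant[OF that assms] by (simp add: degree_def)
  qed
  then have "degree (circulant n k) ` verts (circulant n k) = {2 * k}"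
    using assms by (auto simp: verts_circulant)
  then show ?thesis by (simp add: max_degree_def)
qed

lemma circulant_dominatingI:
  assumes "k < n" "D \<subseteq> {0..<n}" "\<And>x. x < n \<Longrightarrow> \<exists>c\<in>D. cyc_near n k x c"
  shows "dominating (circulant n k) D"
  using assms by (fastforce simp: dominating_iff_closed_nbhd verts_circulant closed_nbhd_circulant)

lemma circulant_efficient_dominating_imp_dvd:
  assumes "2 * k < n" "efficient_dominating (circulant n k) D"
  shows "(2 * k + 1) dvd n"
proof -
  have "D \<subseteq> {0..<n}" using assms(2) by (simp add: efficient_dominating_def verts_circulant)
  then have "(\<Sum>u\<in>D. card (closed_nbhd (circulant n k) u)) = card D * (2 * k + 1)"
    using assms(1) by (simp add: card_closed_nbhd_circulant subset_iff)
  then have "n = card D * (2 * k + 1)"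
    using sum_card_closed_nbhd_efficient[OF symp_adj_circulant _ assms(2)]
    by (simp add: verts_circulant)
  then show ?thesis by (metis dvd_triv_right)
qed

abbreviation punctured_circulant :: "nat \<Rightarrow> nat \<Rightarrow> nat graph" where
  "punctured_circulant n k \<equiv> delete_vertex (circulant n k) 0"

lemma verts_punctured_circulant: "verts (punctured_circulant n k) = {1..<n}"
  by (auto simp: verts_delete_vertex verts_circulant)

lemma closed_nbhd_punctured_circulant:
  assumes "u \<in> {1..<n}" "k < n"
  shows "closed_nbhd (punctured_circulant n k) u = {b. 1 \<le> b \<and> b < n \<and> cyc_near n k u b}"
  using assms by (auto simp: closed_nbhd_delete_vertex closed_nbhd_circulant)

lemma card_closed_nbhd_punctured_circulant:
  assumes "u \<in> {1..<n}" "2 * k < n"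
  shows "card (closed_nbhd (punctured_circulant n k) u) = (if u \<le> k \<or> n \<le> u + k then 2 * k else 2 * k + 1)"
proof -
  have "0 \<in> closed_nbhd (circulant n k) u \<longleftrightarrow> u \<le> k \<or> n \<le> u + k"
    using assms by (auto simp: closed_nbhd_circulant cyc_near_def)
  moreover have "finite (closed_nbhd (circulant n k) u)"
    by (simp add: finite_closed_nbhd verts_circulant)
  ultimately show ?thesis
    using assms card_closed_nbhd_circulant[of u n k]
    by (simp add: closed_nbhd_delete_vertex card_Diff_singleton_if)
qed

lemma punctured_circulant_dominatingI:
  assumes "k < n" "D \<subseteq> {1..<n}" "\<And>x. x \<in> {1..<n} \<Longrightarrow> \<exists>c\<in>D. cyc_near n k x c"
  shows "dominating (punctured_circulant n k) D"
  unfolding dominating_iff_closed_nbhd verts_punctured_circulant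
proof (intro conjI ballI assms(2))
  fix x assume x: "x \<in> {1..<n}"
  then obtain c where "c \<in> D" "cyc_near n k x c" using assms(3) by blast
  then have "c \<in> closed_nbhd (punctured_circulant n k) x"
    using x assms(1,2) by (auto simp: closed_nbhd_punctured_circulant)
  then show "closed_nbhd (punctured_circulant n k) x \<inter> D \<noteq> {}"
    using \<open>c \<in> D\<close> by blast
qed

lemma symp_adj_punctured_circulant: "symp (adj (punctured_circulant n k))"
  by (rule symp_adj_delete_vertex[OF symp_adj_circulant])

lemma closed_nbhd_punctured_circulant_interior:
  assumes "k < u" "u + k < n"
  shows "closed_nbhd (punctured_circulant n k) u = {x. u \<le> x + k \<and> x \<le> u + k}"
  using assms by (auto simp: closed_nbhd_punctured_circulant cyc_near_def)

lemma sum_card_closed_nbhd_punctured_circulant_le: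
  assumes "2 * k < n" "D \<subseteq> {1..<n}"
  shows "(\<Sum>u\<in>D. card (closed_nbhd (punctured_circulant n k) u)) \<le> card D * (2 * k + 1)"
proof -
  have "card (closed_nbhd (punctured_circulant n k) u) \<le> 2 * k + 1" if "u \<in> D" for u
    using that assms card_closed_nbhd_punctured_circulant[of u n k] by auto
  then show ?thesis using sum_bounded_above[of D _ "2 * k + 1"] by simp
qed

lemma card_verts_le_dominating_punctured_circulant:
  assumes "2 * k < n" "dominating (punctured_circulant n k) D"
  shows "n - 1 \<le> card D * (2 * k + 1)"
proof -
  have "D \<subseteq> {1..<n}" using assms(2) by (simp add: dominating_def verts_punctured_circulant)
  then have "(\<Sum>u\<in>D. card (closed_nbhd (punctured_circulant n k) u)) \<le> card D * (2 * k + 1)"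
    by (rule sum_card_closed_nbhd_punctured_circulant_le[OF assms(1)])
  moreover have "n - 1 \<le> (\<Sum>u\<in>D. card (closed_nbhd (punctured_circulant n k) u))"
    using card_verts_le_sum_card_closed_nbhd[OF symp_adj_punctured_circulant _ assms(2)]
    by (simp add: verts_punctured_circulant)
  ultimately show ?thesis by linarith
qed

lemma card_verts_le_dominating_circulant:
  assumes "2 * k < n" "dominating (circulant n k) D"
  shows "n \<le> card D * (2 * k + 1)"
proof -
  have "D \<subseteq> {0..<n}" using assms(2) by (simp add: dominating_def verts_circulant)
  then have "(\<Sum>u\<in>D. card (closed_nbhd (circulant n k) u)) = card D * (2 * k + 1)"
    using assms(1) by (simp add: card_closed_nbhd_circulant subset_iff)
  then show ?thesis
    using card_verts_le_sum_card_closed_nbhd[OF symp_adj_circulant _ assms(2)]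
    by (simp add: verts_circulant)
qed

lemma graph_iso_punctured_circulant:
  assumes "v < n" "k < n"
  shows "graph_iso (punctured_circulant n k) (delete_vertex (circulant n k) v) (\<lambda>x. (x + v) mod n)"
proof
  have "inj_on (\<lambda>x. (x + v) mod n) {1..<n}"
    using assms by (simp add: inj_on_def add_mod_right_inj)
  moreover have "(\<lambda>x. (x + v) mod n) ` {1..<n} = {0..<n} - {v}"
  proof (intro equalityI subsetI)
    fix y assume "y \<in> {0..<n} - {v}"
    then have "(if v \<le> y then y - v else y + n - v) \<in> {1..<n}"
      "y = ((if v \<le> y then y - v else y + n - v) + v) mod n"
      using assms by (auto simp: add_mod_less_double)
    then show "y \<in> (\<lambda>x. (x + v) mod n) ` {1..<n}" by (rule rev_image_eqI)
  next
    fix y assume "y \<in> (\<lambda>x. (x + v) mod n) ` {1..<n}"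
    then obtain x where "x \<in> {1..<n}" "y = (x + v) mod n" by blast
    then show "y \<in> {0..<n} - {v}" using assms by (auto simp: add_mod_less_double)
  qed
  ultimately have "bij_betw (\<lambda>x. (x + v) mod n) {1..<n} ({0..<n} - {v})"
    by (rule bij_betw_imageI)
  then show "bij_betw (\<lambda>x. (x + v) mod n) (verts (punctured_circulant n k))
      (verts (delete_vertex (circulant n k) v))"
    by (unfold verts_punctured_circulant) (simp add: verts_delete_vertex verts_circulant)
next
  fix x y assume "x \<in> verts (punctured_circulant n k)" "y \<in> verts (punctured_circulant n k)"
  then have xy: "x \<in> {1..<n}" "y \<in> {1..<n}" by (simp_all add: verts_punctured_circulant)
  then have ne: "(x + v) mod n \<noteq> v" "(y + v) mod n \<noteq> v"
    and eq: "(x + v) mod n = (y + v) mod n \<longleftrightarrow> x = y"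
    using assms by (auto simp: add_mod_less_double add_mod_right_inj)
  have "adj (delete_vertex (circulant n k) v) ((x + v) mod n) ((y + v) mod n)
      \<longleftrightarrow> adj (circulant n k) ((x + v) mod n) ((y + v) mod n)"
    using ne by (simp add: adj_delete_vertex)
  also have "\<dots> \<longleftrightarrow> x \<noteq> y \<and> cyc_near n k x y"
    using assms xy eq cyc_near_rotate[of x n y v k] by (subst adj_circulant) auto
  also have "\<dots> \<longleftrightarrow> adj (punctured_circulant n k) x y"
    using assms xy by (auto simp: adj_delete_vertex adj_circulant)
  finally show "adj (delete_vertex (circulant n k) v) ((x + v) mod n) ((y + v) mod n)
      \<longleftrightarrow> adj (punctured_circulant n k) x y" .
qed

section \<open>Tiling an interval by arcs\<close>

definition tile_centres :: "nat \<Rightarrow> nat \<Rightarrow> nat set" where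
  "tile_centres k q = (\<lambda>j. k + 1 + j * (2 * k + 1)) ` {..<q}"

lemma finite_tile_centres: "finite (tile_centres k q)"
  by (simp add: tile_centres_def)

lemma card_tile_centres: "card (tile_centres k q) = q"
proof -
  have "inj_on (\<lambda>j. k + 1 + j * (2 * k + 1)) {..<q}"
  proof (rule inj_onI)
    fix i j assume "k + 1 + i * (2 * k + 1) = k + 1 + j * (2 * k + 1)"
    then have "i * (2 * k + 1) = j * (2 * k + 1)" by (simp only: add_left_cancel)
    then show "i = j" by (simp only: mult_cancel2) simp
  qed
  then show ?thesis by (simp add: tile_centres_def card_image)
qed

lemma tile_centres_bounds:
  assumes "c \<in> tile_centres k q"
  shows "k < c" "c + k \<le> q * (2 * k + 1)"
proof -
  obtain j where j: "j < q" "c = k + 1 + j * (2 * k + 1)"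
    using assms by (auto simp: tile_centres_def)
  then have "Suc j * (2 * k + 1) \<le> q * (2 * k + 1)" by (intro mult_le_mono1) simp
  then show "k < c" "c + k \<le> q * (2 * k + 1)" using j by auto
qed

lemma tile_centres_cover:
  assumes "1 \<le> x" "x \<le> q * (2 * k + 1)"
  obtains c where "c \<in> tile_centres k q" "x \<le> c + k" "c \<le> x + k"
proof -
  define m where "m = 2 * k + 1"
  define j where "j = (x - 1) div m"
  have lo: "j * m \<le> x - 1"
    unfolding j_def by (rule div_times_less_eq_dividend)
  have hi: "x - 1 < j * m + m"
    using div_mult_mod_eq[of "x - 1" m] mod_less_divisor[of m "x - 1"] unfolding j_def m_def
    by linarith
  have "x \<le> q * m" using assms(2) by (simp add: m_def)
  then have "j * m < q * m" using lo assms(1) by linarith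
  then have "j < q" by simp
  then have "k + 1 + j * m \<in> tile_centres k q" unfolding tile_centres_def m_def by blast
  moreover have "x \<le> (k + 1 + j * m) + k" "k + 1 + j * m \<le> x + k"
    using lo hi assms(1) m_def by linarith+
  ultimately show ?thesis using that unfolding m_def by blast
qed

lemma subset_tile_centres:
  assumes cover: "\<And>x. 1 \<le> x \<Longrightarrow> x \<le> q * (2 * k + 1) \<Longrightarrow> \<exists>u\<in>D. u \<le> x + k \<and> x \<le> u + k"
    and disjoint: "\<And>x u w. u \<in> D \<Longrightarrow> w \<in> D \<Longrightarrow> u \<le> x + k \<Longrightarrow> x \<le> u + k \<Longrightarrow>
      w \<le> x + k \<Longrightarrow> x \<le> w + k \<Longrightarrow> u = w"
    and interior: "\<And>u. u \<in> D \<Longrightarrow> k < u \<and> u + k \<le> q * (2 * k + 1)"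
  shows "D \<subseteq> tile_centres k q"
proof
  define m where "m = 2 * k + 1"
  have centre: "u \<in> D \<Longrightarrow> \<exists>j. u = k + 1 + j * m" for u
  proof (induction u rule: less_induct)
    case (less u)
    show ?case
    proof (cases "u = k + 1")
      case True
      then show ?thesis by (intro exI[of _ 0]) simp
    next
      case False
      \<comment> \<open>the tile left of \<open>u\<close> must end exactly at \<open>u - k - 1\<close>\<close>
      have u: "k + 1 < u" "u + k \<le> q * (2 * k + 1)" using interior[OF less.prems] False by auto
      then have "1 \<le> u - k - 1" "u - k - 1 \<le> q * (2 * k + 1)" by linarith+
      then obtain w where w: "w \<in> D" "w \<le> u - k - 1 + k" "u - k - 1 \<le> w + k"
        using cover by blast
      have "\<not> u - k \<le> w + k"
      proof
        assume "u - k \<le> w + k"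
        then have "u = w" using disjoint[OF less.prems w(1), of "u - k"] w u by linarith
        then show False using w u by linarith
      qed
      then have "u = w + m" using w u m_def by linarith
      moreover obtain j where "w = k + 1 + j * m" using less.IH[OF _ w(1)] \<open>u = w + m\<close> m_def by auto
      ultimately show ?thesis by (intro exI[of _ "Suc j"]) simp
    qed
  qed
  fix u assume "u \<in> D"
  then obtain j where j: "u = k + 1 + j * m" using centre by blast
  have "Suc j * m \<le> q * m" using interior[OF \<open>u \<in> D\<close>] j m_def by simp
  then have "j < q" using m_def by (simp only: mult_le_cancel2) simp
  then show "u \<in> tile_centres k q" using j unfolding tile_centres_def m_def by blast
qed

lemma card_insert_tile_centres:
  assumes "a \<le> k"
  shows "card (insert a (tile_centres k q)) = q + 1"
proof -
  have "a \<notin> tile_centres k q" using assms tile_centres_bounds(1) by fastforce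
  then show ?thesis by (simp add: card_tile_centres finite_tile_centres)
qed

section \<open>The case \<open>2k + 1\<close> divides \<open>n - 1\<close>\<close>

context
  fixes n k q :: nat
  assumes k_less: "2 * k < n" and card_verts: "n - 1 = q * (2 * k + 1)"
begin

lemma tile_centres_subset_verts: "tile_centres k q \<subseteq> {1..<n}"
  using tile_centres_bounds card_verts by fastforce

lemma dominating_tile_centres: "dominating (punctured_circulant n k) (tile_centres k q)"
proof (rule punctured_circulant_dominatingI)
  fix x assume "x \<in> {1..<n}"
  moreover have "x \<le> q * (2 * k + 1)" using \<open>x \<in> {1..<n}\<close> card_verts by auto
  ultimately obtain c where "c \<in> tile_centres k q" "x \<le> c + k" "c \<le> x + k"
    using tile_centres_cover[of x q k] by auto
  then show "\<exists>c\<in>tile_centres k q. cyc_near n k x c" by (auto simp: cyc_near_def)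
qed (use k_less tile_centres_subset_verts in auto)

lemma domination_number_punctured_circulant: "domination_number (punctured_circulant n k) = q"
proof -
  have "q \<le> card D" if "dominating (punctured_circulant n k) D" for D
  proof -
    have "q * (2 * k + 1) \<le> card D * (2 * k + 1)"
      using card_verts_le_dominating_punctured_circulant[OF k_less that] card_verts by simp
    then show ?thesis by (simp only: mult_le_cancel2)
  qed
  then show ?thesis
    using domination_number_eqI[OF _ dominating_tile_centres] card_tile_centres
    by (simp add: verts_punctured_circulant)
qed

lemma gamma_set_tile_centres: "gamma_set (punctured_circulant n k) (tile_centres k q)"
  by (simp add: gamma_set_def dominating_tile_centres domination_number_punctured_circulant card_tile_centres)

lemma gamma_set_punctured_circulant_efficient:
  assumes "gamma_set (punctured_circulant n k) D"
  shows "efficient_dominating (punctured_circulant n k) D"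
proof (rule efficient_dominating_if_sum_card_closed_nbhd_le[OF symp_adj_punctured_circulant])
  show dom: "dominating (punctured_circulant n k) D" using assms by (simp add: gamma_set_def)
  then have "D \<subseteq> {1..<n}" by (simp add: dominating_def verts_punctured_circulant)
  moreover have "card D = q"
    using assms by (simp add: gamma_set_def domination_number_punctured_circulant)
  ultimately have "(\<Sum>u\<in>D. card (closed_nbhd (punctured_circulant n k) u)) \<le> q * (2 * k + 1)"
    using sum_card_closed_nbhd_punctured_circulant_le[OF k_less] by blast
  then show "(\<Sum>u\<in>D. card (closed_nbhd (punctured_circulant n k) u))
      \<le> card (verts (punctured_circulant n k))"
    using card_verts by (simp add: verts_punctured_circulant)
qed (simp add: verts_punctured_circulant)

text \<open>A minimum dominating set attains the counting bound, so each of its closed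
  neighbourhoods has the full size \<open>2k + 1\<close>.\<close>
lemma gamma_set_punctured_circulant_interior:
  assumes "gamma_set (punctured_circulant n k) D" "u \<in> D"
  shows "k < u" "u + k < n"
proof -
  let ?N = "closed_nbhd (punctured_circulant n k)"
  have D: "D \<subseteq> {1..<n}" "card D = q"
    using assms(1) by (simp_all add: gamma_set_def dominating_def verts_punctured_circulant
        domination_number_punctured_circulant)
  have le: "card (?N v) \<le> 2 * k + 1" if "v \<in> D" for v
    using that D k_less card_closed_nbhd_punctured_circulant[of v n k] by auto
  have "(\<Sum>v\<in>D. card (?N v)) = (\<Sum>v\<in>D. 2 * k + 1)"
    using sum_card_closed_nbhd_efficient[OF symp_adj_punctured_circulant _
        gamma_set_punctured_circulant_efficient[OF assms(1)]] D card_verts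
    by (simp add: verts_punctured_circulant)
  then have "card (?N u) = 2 * k + 1"
    using sum_mono_inv[OF _ le assms(2)] D by (simp add: finite_subset)
  then show "k < u" "u + k < n"
    using card_closed_nbhd_punctured_circulant[of u n k] D assms(2) k_less
    by (auto split: if_splits)
qed

lemma gamma_set_punctured_circulant_unique:
  assumes "gamma_set (punctured_circulant n k) D"
  shows "D = tile_centres k q"
proof -
  let ?N = "closed_nbhd (punctured_circulant n k)"
  have dom: "dominating (punctured_circulant n k) D" and card_D: "card D = q"
    using assms by (simp_all add: gamma_set_def domination_number_punctured_circulant)
  have sub: "D \<subseteq> {1..<n}" using dom by (simp add: dominating_def verts_punctured_circulant)
  note interior = gamma_set_punctured_circulant_interior[OF assms]
  have N: "x \<in> ?N u \<longleftrightarrow> u \<le> x + k \<and> x \<le> u + k" if "u \<in> D" for u x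
    using interior[OF that] by (simp add: closed_nbhd_punctured_circulant_interior)
  have "D \<subseteq> tile_centres k q"
  proof (rule subset_tile_centres)
    fix x assume "1 \<le> x" "x \<le> q * (2 * k + 1)"
    then have x: "x \<in> verts (punctured_circulant n k)"
      using card_verts by (simp add: verts_punctured_circulant)
    then obtain u where u: "u \<in> D" "u \<in> ?N x"
      using dom by (auto simp: dominating_iff_closed_nbhd)
    then have "x \<in> ?N u"
      using mem_closed_nbhd_commute[OF symp_adj_punctured_circulant x] sub
      by (auto simp: verts_punctured_circulant)
    then show "\<exists>u\<in>D. u \<le> x + k \<and> x \<le> u + k" using N u(1) by blast
  next
    fix x u w assume uw: "u \<in> D" "w \<in> D" "u \<le> x + k" "x \<le> u + k" "w \<le> x + k" "x \<le> w + k"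
    then have x: "x \<in> verts (punctured_circulant n k)"
      using interior by (force simp: verts_punctured_circulant)
    have "u \<in> verts (punctured_circulant n k)" "w \<in> verts (punctured_circulant n k)"
      using sub uw(1,2) by (auto simp: verts_punctured_circulant)
    then have "u \<in> ?N x \<inter> D" "w \<in> ?N x \<inter> D"
      using uw N mem_closed_nbhd_commute[OF symp_adj_punctured_circulant x] by auto
    moreover have "card (?N x \<inter> D) = 1"
      using gamma_set_punctured_circulant_efficient[OF assms] x by (simp add: efficient_dominating_def)
    ultimately show "u = w" by (metis card_1_singletonE singletonD)
  next
    fix u assume "u \<in> D"
    then show "k < u \<and> u + k \<le> q * (2 * k + 1)" using interior card_verts by fastforce
  qed
  then show ?thesis
    using card_D card_tile_centres finite_tile_centres by (simp add: card_subset_eq)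
qed

lemma ex1_gamma_set_punctured_circulant: "\<exists>!D. gamma_set (punctured_circulant n k) D"
  using gamma_set_tile_centres gamma_set_punctured_circulant_unique by blast

lemma efficient_dominating_tile_centres:
  "efficient_dominating (punctured_circulant n k) (tile_centres k q)"
  by (rule gamma_set_punctured_circulant_efficient[OF gamma_set_tile_centres])

lemma dominating_insert_tile_centres:
  assumes "cyc_near n k 0 a" "a < n"
  shows "dominating (circulant n k) (insert a (tile_centres k q))"
proof (rule circulant_dominatingI)
  fix x assume "x < n"
  show "\<exists>c\<in>insert a (tile_centres k q). cyc_near n k x c"
  proof (cases "x = 0")
    case True then show ?thesis using assms by blast
  next
    case False
    moreover have "x \<le> q * (2 * k + 1)" using \<open>x < n\<close> card_verts by auto
    ultimately obtain c where "c \<in> tile_centres k q" "x \<le> c + k" "c \<le> x + k"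
      using tile_centres_cover[of x q k] by auto
    then show ?thesis by (auto simp: cyc_near_def)
  qed
qed (use k_less assms tile_centres_subset_verts in auto)

lemma domination_number_circulant: "domination_number (circulant n k) = q + 1"
proof -
  have "q + 1 \<le> card D" if "dominating (circulant n k) D" for D
  proof -
    have "q * (2 * k + 1) < card D * (2 * k + 1)"
      using card_verts_le_dominating_circulant[OF k_less that] card_verts k_less by linarith
    then show ?thesis by (simp only: mult_less_cancel2) simp
  qed
  then show ?thesis
    using domination_number_eqI[OF _ dominating_insert_tile_centres[of 0]] k_less
    by (simp add: verts_circulant cyc_near_refl card_insert_tile_centres)
qed

lemma circulant_two_gamma_sets:
  assumes "1 \<le> k"
  shows "\<exists>D1 D2. D1 \<noteq> D2 \<and> gamma_set (circulant n k) D1 \<and> gamma_set (circulant n k) D2"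
proof -
  have "gamma_set (circulant n k) (insert a (tile_centres k q))" if "a \<le> 1" for a
  proof -
    have "cyc_near n k 0 a" "a < n" "a \<le> k" using that assms k_less by (auto simp: cyc_near_def)
    then show ?thesis
      by (simp add: gamma_set_def domination_number_circulant card_insert_tile_centres
          dominating_insert_tile_centres)
  qed
  moreover have "insert 0 (tile_centres k q) \<noteq> insert 1 (tile_centres k q)"
    using tile_centres_bounds(1) assms by fastforce
  ultimately show ?thesis by (meson le_refl zero_le)
qed

end

lemma circulant_no_efficient_dominating:
  assumes "2 * k < n" "1 \<le> k" "(2 * k + 1) dvd (n - 1)"
  shows "\<not> efficient_dominating (circulant n k) D"
proof
  assume "efficient_dominating (circulant n k) D"
  then have "(2 * k + 1) dvd n" by (rule circulant_efficient_dominating_imp_dvd[OF assms(1)])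
  then have "(2 * k + 1) dvd (n - (n - 1))" using assms(3) by (rule dvd_diff_nat)
  then show False using assms(1,2) by simp
qed

section \<open>The case \<open>2k + 1\<close> does not divide \<open>n - 1\<close>\<close>

lemma gamma_set_punctured_circulant_insert:
  assumes k: "1 \<le> k" "2 * k < n"
    and q: "q * (2 * k + 1) < n - 1"
    and c: "q * (2 * k + 1) \<le> c" "1 \<le> c" "c < n"
    and c_cover: "\<And>x. q * (2 * k + 1) < x \<Longrightarrow> x < n \<Longrightarrow> x \<le> c + k \<and> c \<le> x + k"
  shows "gamma_set (punctured_circulant n k) (insert c (tile_centres k q))"
proof -
  let ?D = "insert c (tile_centres k q)"
  have "c \<notin> tile_centres k q" using tile_centres_bounds(2) c(1) k(1) by fastforce
  then have card: "card ?D = q + 1" by (simp add: card_tile_centres finite_tile_centres)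
  have dom: "dominating (punctured_circulant n k) ?D"
  proof (rule punctured_circulant_dominatingI)
    show "?D \<subseteq> {1..<n}" using c q tile_centres_bounds by fastforce
    fix x assume x: "x \<in> {1..<n}"
    show "\<exists>c'\<in>?D. cyc_near n k x c'"
    proof (cases "x \<le> q * (2 * k + 1)")
      case True
      then obtain c' where "c' \<in> tile_centres k q" "x \<le> c' + k" "c' \<le> x + k"
        using tile_centres_cover[of x q k] x by auto
      then show ?thesis by (auto simp: cyc_near_def)
    next
      case False
      then show ?thesis using c_cover[of x] x by (auto simp: cyc_near_def)
    qed
  qed (use k in auto)
  have "q + 1 \<le> card D" if "dominating (punctured_circulant n k) D" for D
  proof -
    have "q * (2 * k + 1) < card D * (2 * k + 1)"
      using card_verts_le_dominating_punctured_circulant[OF k(2) that] q by linarith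
    then show ?thesis by (simp only: mult_less_cancel2) simp
  qed
  then have "domination_number (punctured_circulant n k) = q + 1"
    using domination_number_eqI[OF _ dom] card by (simp add: verts_punctured_circulant)
  then show ?thesis using dom card by (simp add: gamma_set_def)
qed

text \<open>If \<open>n - 1 = q (2k+1) + s\<close> with \<open>0 < s\<close>, the tiles leave the vertices \<open>q (2k+1) + 1, \<dots>, n - 1\<close>
  uncovered, and one extra centre \<open>c\<close> or \<open>c - 1\<close> covers them.\<close>
lemma punctured_circulant_two_gamma_sets:
  assumes "1 \<le> k" "2 * k + 1 < n" "\<not> (2 * k + 1) dvd (n - 1)"
  shows "\<exists>D1 D2. D1 \<noteq> D2 \<and> gamma_set (punctured_circulant n k) D1 \<and> gamma_set (punctured_circulant n k) D2"
proof -
  define q where "q = (n - 1) div (2 * k + 1)"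
  define s where "s = (n - 1) mod (2 * k + 1)"
  define c where "c = q * (2 * k + 1) + min (k + 1) s"
  have n: "n - 1 = q * (2 * k + 1) + s" unfolding q_def s_def by (rule div_mult_mod_eq[symmetric])
  have s: "0 < s" "s < 2 * k + 1" using assms(3) by (simp_all add: s_def dvd_eq_mod_eq_0)
  have "1 \<le> q"
    using n s assms(2) by (cases q) auto
  then have "1 * (2 * k + 1) \<le> q * (2 * k + 1)" by (rule mult_le_mono1)
  then have "gamma_set (punctured_circulant n k) (insert c' (tile_centres k q))"
    if "c' \<in> {c, c - 1}" for c'
    using that assms(1,2) n s
    by (intro gamma_set_punctured_circulant_insert) (auto simp: c_def)
  moreover have "c \<notin> tile_centres k q" "c - 1 \<noteq> c"
    using tile_centres_bounds(2) assms(1) s by (fastforce simp: c_def)+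
  ultimately show ?thesis
    by (intro exI[of _ "insert c (tile_centres k q)"] exI[of _ "insert (c - 1) (tile_centres k q)"])
      auto
qed

lemma ex1_gamma_set_delete_vertex_circulant:
  assumes "2 * k < n" "n - 1 = q * (2 * k + 1)" "v \<in> verts (circulant n k)"
  shows "\<exists>!D. gamma_set (delete_vertex (circulant n k) v) D"
  using assms graph_iso.ex1_gamma_set_transfer[OF graph_iso_punctured_circulant
      ex1_gamma_set_punctured_circulant]
  by (simp add: verts_circulant)

lemma efficient_dominating_delete_vertex_circulant:
  assumes "2 * k < n" "n - 1 = q * (2 * k + 1)" "v \<in> verts (circulant n k)"
  shows "\<exists>D. efficient_dominating (delete_vertex (circulant n k) v) D"
proof -
  have "v < n" "k < n" using assms(1,3) by (simp_all add: verts_circulant)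
  then show ?thesis
    using graph_iso.efficient_dominating_image[OF graph_iso_punctured_circulant
        efficient_dominating_tile_centres[OF assms(1,2)]]
    by blast
qed

lemma hypo_unique_circulant:
  assumes "1 \<le> k" "2 * k < n" "n - 1 = q * (2 * k + 1)"
  shows "hypo_unique (circulant n k)"
  using circulant_two_gamma_sets[OF assms(2,3,1)] ex1_gamma_set_delete_vertex_circulant[OF assms(2,3)]
  by (simp add: hypo_unique_def)

lemma hypo_efficient_circulant:
  assumes "1 \<le> k" "2 * k < n" "n - 1 = q * (2 * k + 1)"
  shows "hypo_efficient (circulant n k)"
proof -
  have "(2 * k + 1) dvd (n - 1)" unfolding assms(3) by (rule dvd_triv_right)
  then show ?thesis
    using circulant_no_efficient_dominating[OF assms(2,1)]
      efficient_dominating_delete_vertex_circulant[OF assms(2,3)]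
    unfolding hypo_efficient_def by blast
qed

lemma not_hypo_unique_circulant:
  assumes "1 \<le> k" "2 * k + 1 < n" "\<not> (2 * k + 1) dvd (n - 1)"
  shows "\<not> hypo_unique (circulant n k)"
proof -
  have "0 \<in> verts (circulant n k)" using assms(2) by (simp add: verts_circulant)
  moreover have "\<not> (\<exists>!D. gamma_set (punctured_circulant n k) D)"
    using punctured_circulant_two_gamma_sets[OF assms] by blast
  ultimately show ?thesis unfolding hypo_unique_def by blast
qed

theorem proposition3p19:
  fixes n k :: nat
  assumes "n \<ge> 4" and "1 \<le> k" and "k < n div 2"
  shows "(hypo_unique (circulant n k) \<longleftrightarrow> (2 * k + 1) dvd (n - 1)) \<and>
         ((2 * k + 1) dvd (n - 1) \<longrightarrow>
            int n = (int (max_degree (circulant n k)) + 1) * (int (domination_number (circulant n k)) - 1) + 1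
            \<and> hypo_efficient (circulant n k))"
proof -
  have k_less: "2 * k + 1 < n" using assms(3) by linarith
  then have k2: "2 * k < n" by simp
  have "hypo_unique (circulant n k) \<and> hypo_efficient (circulant n k) \<and>
      int n = (int (max_degree (circulant n k)) + 1) * (int (domination_number (circulant n k)) - 1) + 1"
    if "(2 * k + 1) dvd (n - 1)"
  proof -
    from that obtain q where "n - 1 = (2 * k + 1) * q" by (rule dvdE)
    then have q: "n - 1 = q * (2 * k + 1)" by (simp only: mult.commute)
    then have "int n = (int (2 * k) + 1) * (int (q + 1) - 1) + 1"
      using k2 by (simp add: algebra_simps of_nat_diff flip: of_nat_mult)
    then show ?thesis
      using hypo_unique_circulant[OF assms(2) k2 q] hypo_efficient_circulant[OF assms(2) k2 q]
      by (simp only: max_degree_circulant[OF k2] domination_number_circulant[OF k2 q])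
  qed
  then show ?thesis using not_hypo_unique_circulant[OF assms(2) k_less] by blast
qed

end
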